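(* For every odd integer $d\ge 3$ there exists a generalized bicycle code with parameters $[[d^2+1,2,d]]$ which is $(2,4)$-regular. Moreover, for every such $d$ except $d=3$, this code is degenerate, having non-identity stabilizers of weight $4<d$.
   Context: For $a(x),b(x)\in R_n=\mathbb{F}_2[x]/\langle x^n-1\rangle$, the generalized bicycle (GB) code is the CSS code on $2n$ qubits whose X-check matrix $H_X$ has rows $x^i(a(x),b(x))$, $0\le i\le n-1$, and whose Z-check matrix $H_Z$ has rows $x^i(b(x^{-1}),a(x^{-1}))$ (vectors of $\mathbb{F}_2^{2n}$ written as pairs of polynomials, $x^{-1}=x^{n-1}$); its dimension is $2n-\mathrm{rank}H_X-\mathrm{rank}H_Z$ and its minimum distance is the minimum weight of a Pauli operator commuting with all stabilizers but not in the stabilizer group. The code is $(2,4)$-regular if every row of $H_X$ and $H_Z$ has weight 4 and every column has weight 2. A code of minimum distance $d$ is degenerate if its stabilizer group contains a non-identity element of weight less than $d$. $[[N,K,D]]$: $N$ physical qubits, $K$ logical qubits, distance $D$. *)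

theory Defs
  imports Main "HOL-Library.Z2"
begin

text \<open>An element a(x) of R_n = F_2[x]/(x^n - 1) is given by its coefficient
  function (coefficient of x^k for k < n, zero for k >= n).\<close>

definition f2vec :: "nat \<Rightarrow> (nat \<Rightarrow> bit) set" where
  "f2vec N = {v. \<forall>j\<ge>N. v j = 0}"

definition ring_elem :: "nat \<Rightarrow> (nat \<Rightarrow> bit) \<Rightarrow> bool" where
  "ring_elem n a \<longleftrightarrow> a \<in> f2vec n"

text \<open>Row i of H_X: x^i (a(x), b(x)); coordinates 0..n-1 first block, n..2n-1 second.\<close>
definition hx_row :: "nat \<Rightarrow> (nat \<Rightarrow> bit) \<Rightarrow> (nat \<Rightarrow> bit) \<Rightarrow> nat \<Rightarrow> nat \<Rightarrow> bit" where
  "hx_row n a b i j =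
     (if j < n then a (nat ((int j - int i) mod int n))
      else if j < 2*n then b (nat ((int (j - n) - int i) mod int n))
      else 0)"

text \<open>Row i of H_Z: x^i (b(x^{-1}), a(x^{-1})).\<close>
definition hz_row :: "nat \<Rightarrow> (nat \<Rightarrow> bit) \<Rightarrow> (nat \<Rightarrow> bit) \<Rightarrow> nat \<Rightarrow> nat \<Rightarrow> bit" where
  "hz_row n a b i j =
     (if j < n then b (nat ((int i - int j) mod int n))
      else if j < 2*n then a (nat ((int i - int (j - n)) mod int n))
      else 0)"

definition f2span :: "(nat \<Rightarrow> bit) set \<Rightarrow> (nat \<Rightarrow> bit) set" where
  "f2span S = {(\<lambda>j. \<Sum>r\<in>R. r j) | R. finite R \<and> R \<subseteq> S}"

definition f2rank :: "(nat \<Rightarrow> nat \<Rightarrow> bit) \<Rightarrow> nat \<Rightarrow> nat" where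
  "f2rank H m = (LEAST k. \<exists>B. finite B \<and> card B = k \<and> f2span B = f2span (H ` {..<m}))"

definition gb_dim :: "nat \<Rightarrow> (nat \<Rightarrow> bit) \<Rightarrow> (nat \<Rightarrow> bit) \<Rightarrow> nat" where
  "gb_dim n a b = 2*n - f2rank (hx_row n a b) n - f2rank (hz_row n a b) n"

text \<open>Pauli operators on 2n qubits modulo phase: pairs (X-part, Z-part).\<close>
definition paulis :: "nat \<Rightarrow> ((nat \<Rightarrow> bit) \<times> (nat \<Rightarrow> bit)) set" where
  "paulis N = f2vec N \<times> f2vec N"

definition pauli_weight :: "nat \<Rightarrow> (nat \<Rightarrow> bit) \<times> (nat \<Rightarrow> bit) \<Rightarrow> nat" where
  "pauli_weight N p = card {j. j < N \<and> (fst p j \<noteq> 0 \<or> snd p j \<noteq> 0)}"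

text \<open>Symplectic form: 0 iff the two Pauli operators commute.\<close>
definition symp :: "nat \<Rightarrow> (nat \<Rightarrow> bit) \<times> (nat \<Rightarrow> bit) \<Rightarrow> (nat \<Rightarrow> bit) \<times> (nat \<Rightarrow> bit) \<Rightarrow> bit" where
  "symp N p q = (\<Sum>j<N. fst p j * snd q j + snd p j * fst q j)"

definition gb_stab :: "nat \<Rightarrow> (nat \<Rightarrow> bit) \<Rightarrow> (nat \<Rightarrow> bit) \<Rightarrow> ((nat \<Rightarrow> bit) \<times> (nat \<Rightarrow> bit)) set" where
  "gb_stab n a b = f2span (hx_row n a b ` {..<n}) \<times> f2span (hz_row n a b ` {..<n})"

definition gb_logical :: "nat \<Rightarrow> (nat \<Rightarrow> bit) \<Rightarrow> (nat \<Rightarrow> bit) \<Rightarrow> ((nat \<Rightarrow> bit) \<times> (nat \<Rightarrow> bit)) set" where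
  "gb_logical n a b = {p \<in> paulis (2*n). (\<forall>s\<in>gb_stab n a b. symp (2*n) p s = 0) \<and> p \<notin> gb_stab n a b}"

definition gb_distance :: "nat \<Rightarrow> (nat \<Rightarrow> bit) \<Rightarrow> (nat \<Rightarrow> bit) \<Rightarrow> nat" where
  "gb_distance n a b = (LEAST w. \<exists>p\<in>gb_logical n a b. pauli_weight (2*n) p = w)"

definition regular_2_4 :: "nat \<Rightarrow> (nat \<Rightarrow> nat \<Rightarrow> bit) \<Rightarrow> bool" where
  "regular_2_4 n H \<longleftrightarrow>
     (\<forall>i<n. card {j. j < 2*n \<and> H i j \<noteq> 0} = 4) \<and>
     (\<forall>j<2*n. card {i. i < n \<and> H i j \<noteq> 0} = 2)"

definition gb_regular_2_4 :: "nat \<Rightarrow> (nat \<Rightarrow> bit) \<Rightarrow> (nat \<Rightarrow> bit) \<Rightarrow> bool" where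
  "gb_regular_2_4 n a b \<longleftrightarrow> regular_2_4 n (hx_row n a b) \<and> regular_2_4 n (hz_row n a b)"

definition gb_degenerate :: "nat \<Rightarrow> (nat \<Rightarrow> bit) \<Rightarrow> (nat \<Rightarrow> bit) \<Rightarrow> bool" where
  "gb_degenerate n a b \<longleftrightarrow>
     (\<exists>s\<in>gb_stab n a b. s \<noteq> (\<lambda>_. 0, \<lambda>_. 0) \<and> pauli_weight (2*n) s < gb_distance n a b)"

end

theory Submission
  imports Defs
begin

(* Write n = 2m^2 + 2m + 1 and d = 2m + 1, so that 2n = d^2 + 1, and take a(x) = 1 + x,
   b(x) = 1 + x^d.  On the vertex set Z_n let the first block of qubits be the edges {j, j+d} and
   the second block the edges {j, j+1}.  The rows of H_Z are then the vertex stars and the rows of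
   H_X the square faces {j, j+1, j+d, j+d+1}: this is a toric code on a twisted torus.  Stars and
   faces each satisfy a single relation (their total sum), hence K = 2.

   An X-logical is a cycle that is not a boundary, and a cycle with an even number of edges in each
   block is a boundary, so a logical cycle has odd parity in one block.  For a potential on the
   vertices that climbs by constant amounts l1, l2 along the two kinds of edges, the edges whose
   potential interval contains a level theta form a cut.  Consecutive cuts differ by a sum of stars,
   so a cycle meets all n cuts with the same parity, and double counting over the n (odd) levels
   identifies this parity as l1 * (parity of block 1) + l2 * (parity of block 2).  The potentials
   t -> (m+1) t and t -> m t climb by (m, m+1) and (-(m+1), m), so for one of them the parity is
   odd: the cycle then meets every cut, while each edge lies in at most m+1 cuts, and its weight
   exceeds n / (m+1) > 2m.  Z-logicals reduce to X-logicals by the reflection j -> -j, which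
   exchanges stars and faces.  The level-0 cut of the first potential is a Z-logical of weight
   m + (m+1) = d, and a single face is a stabilizer of weight 4. *)

declare add_bit_eq_xor [simp del] mult_bit_eq_and [simp del]

lemma bit_add_self [simp]: "(x::bit) + x = 0"
  by (cases x) auto

lemma bit_add_self_left [simp]: "(x::bit) + (x + y) = y"
  by (simp add: add.assoc[symmetric])

lemma bit_add_eq_0_iff: "(x::bit) + y = 0 \<longleftrightarrow> x = y"
  by (cases x; cases y) auto

lemma of_nat_bit: "(of_nat k :: bit) = of_bool (odd k)"
  by (induction k) auto

lemma bit_sum_const_odd:
  fixes g :: "nat \<Rightarrow> bit"
  assumes "odd N" and step: "\<And>j. Suc j < N \<Longrightarrow> g (Suc j) = g j" and "j < N"
  shows "g j = (\<Sum>i<N. g i)"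
proof -
  have const: "g i = g 0" if "i < N" for i
    using that by (induction i) (simp_all add: step)
  have "(\<Sum>i<N. g i) = (\<Sum>i<N. g 0)"
    by (rule sum.cong[OF refl const]) simp
  then show ?thesis using assms const[OF \<open>j < N\<close>] by (simp add: of_nat_bit)
qed

lemma of_bool_disj_distinct:
  "p \<noteq> q \<Longrightarrow> (of_bool (j = p \<or> j = q) :: 'a::semiring_1) = of_bool (j = p) + of_bool (j = q)"
  by auto

lemma sum_of_bool_two_points:
  assumes "p \<noteq> q" "finite K"
  shows "(\<Sum>i\<in>K. (of_bool (i = p \<or> i = q) :: 'a::comm_semiring_1)) = of_bool (p \<in> K) + of_bool (q \<in> K)"
  using assms by (simp only: of_bool_disj_distinct[OF assms(1)] sum.distrib) (simp add: of_bool_def)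

lemma sum_mult_of_bool_two_points:
  fixes c :: "'b \<Rightarrow> 'a::comm_semiring_1"
  assumes "p \<noteq> q" "p \<in> A" "q \<in> A" "finite A"
  shows "(\<Sum>j\<in>A. c j * of_bool (j = p \<or> j = q)) = c p + c q"
  using assms by (simp only: of_bool_disj_distinct[OF assms(1)] distrib_left sum.distrib)
    (simp add: of_bool_def if_distrib[of "(*) _"] cong: if_cong)

lemma sum_two_points_eq_0:
  fixes n :: nat
  assumes "p \<noteq> q" "p < n" "q < n" "\<And>j. j < n \<Longrightarrow> f j = (of_bool (j = p \<or> j = q) :: bit)"
  shows "(\<Sum>j<n. f j) = 0"
proof -
  have "(\<Sum>j<n. (of_bool (j = p \<or> j = q) :: bit)) = of_bool (p \<in> {..<n}) + of_bool (q \<in> {..<n})"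
    by (rule sum_of_bool_two_points[OF assms(1)]) simp
  then show ?thesis using assms by simp
qed

lemma card_two_points:
  assumes "p \<noteq> q" "p < n" "q < n"
    and "\<And>j. j < n \<Longrightarrow> f j = (of_bool (j = p \<or> j = q) :: 'a::zero_neq_one)"
  shows "card {j. j < n \<and> f j \<noteq> 0} = 2"
proof -
  have "{j. j < n \<and> f j \<noteq> 0} = {p, q}" using assms by auto
  then show ?thesis using assms(1) by simp
qed

lemma sum_lessThan_of_bool:
  fixes N :: nat
  shows "(\<Sum>x<N. of_bool (P x) :: 'a::comm_semiring_1) = of_nat (card {x. x < N \<and> P x})"
proof -
  have "{..<N} \<inter> {x. P x} = {x. x < N \<and> P x}" by auto
  then show ?thesis by simp
qed

lemma block_cases:
  fixes J n :: nat
  obtains (fst) "J < n" | (snd) j where "j < n" "J = n + j" | (out) "2*n \<le> J"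
  by (metis add_diff_inverse_nat mult_2 nat_add_left_cancel_less not_less)

lemma sum_lessThan_double:
  fixes f :: "nat \<Rightarrow> 'a::comm_monoid_add"
  shows "(\<Sum>j<2*n. f j) = (\<Sum>j<n. f j) + (\<Sum>j<n. f (n+j))"
proof -
  have "x \<in> (\<lambda>j. n+j) ` {..<n}" if "x < 2*n" "x \<notin> {..<n}" for x
    using that by (intro image_eqI[of _ _ "x-n"]) auto
  then have "{..<2*n} = {..<n} \<union> (\<lambda>j. n+j) ` {..<n}" by auto
  moreover have "{..<n} \<inter> (\<lambda>j. n+j) ` {..<n} = {}" by auto
  ultimately show ?thesis by (simp add: sum.union_disjoint sum.reindex)
qed

lemma card_lessThan_double:
  fixes n :: nat
  shows "card {j. j < 2*n \<and> P j} = card {j. j < n \<and> P j} + card {j. j < n \<and> P (n+j)}"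
proof -
  have "x \<in> (\<lambda>j. n+j) ` {j. j < n \<and> P (n+j)}" if "x < 2*n" "\<not> x < n" "P x" for x
    using that by (intro image_eqI[of _ _ "x-n"]) auto
  then have split: "{j. j < 2*n \<and> P j} = {j. j < n \<and> P j} \<union> (\<lambda>j. n+j) ` {j. j < n \<and> P (n+j)}"
    by auto
  have "card ((\<lambda>j. n+j) ` {j. j < n \<and> P (n+j)}) = card {j. j < n \<and> P (n+j)}"
    by (rule card_image) (auto simp: inj_on_def)
  then show ?thesis unfolding split by (subst card_Un_disjoint) auto
qed

lemma sum_symdiff_bit:
  fixes f :: "'a \<Rightarrow> bit"
  assumes "finite X" "finite Y"
  shows "sum f X + sum f Y = sum f ((X - Y) \<union> (Y - X))"
proof -
  have "sum f X = sum f (X \<inter> Y) + sum f (X - Y)" using assms(1) by (rule sum.Int_Diff)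
  moreover have "sum f Y = sum f (X \<inter> Y) + sum f (Y - X)"
    using assms(2) sum.Int_Diff[of Y f X] by (simp add: Int_commute)
  moreover have "sum f ((X - Y) \<union> (Y - X)) = sum f (X - Y) + sum f (Y - X)"
    using assms by (intro sum.union_disjoint) auto
  ultimately show ?thesis by (simp add: algebra_simps)
qed

lemma nat_mod_diff_eq:
  assumes "x < n" "y < n"
  shows "nat ((int x - int y) mod int n) = (if y \<le> x then x - y else x + n - y)"
proof (cases "y \<le> x")
  case True
  then have "int x - int y = int (x - y)" by simp
  then show ?thesis using True assms by (simp add: nat_mod_distrib)
next
  case False
  then have e: "int (x + n - y) = (int x - int y) + int n" using assms by simp
  have "(int x - int y) mod int n = int (x + n - y) mod int n" unfolding e by (simp only: mod_add_self2)
  also have "\<dots> = int (x + n - y)" using assms False by (intro mod_pos_pos_trivial) auto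
  finally show ?thesis using False by simp
qed

lemma mod_add_less_double: "(y::nat) + k < 2*n \<Longrightarrow> (y+k) mod n = (if y+k < n then y+k else y+k-n)"
  by (simp add: le_mod_geq)

lemma mod_add_diff: "(x::nat) < n \<Longrightarrow> k \<le> n \<Longrightarrow> (x + n - k) mod n = (if k \<le> x then x - k else x + n - k)"
  by (auto simp: le_mod_geq)

lemma nat_mod_diff_eq_iff:
  assumes "x < n" "y < n" "k < n"
  shows "nat ((int x - int y) mod int n) = k \<longleftrightarrow> x = (y+k) mod n"
  using assms by (auto simp: nat_mod_diff_eq mod_add_less_double)

lemma eq_mod_add_iff:
  assumes "x < (n::nat)" "y < n" "k < n"
  shows "x = (y+k) mod n \<longleftrightarrow> y = (x + n - k) mod n"
  using assms by (auto simp: mod_add_less_double mod_add_diff)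

lemma mod_diff_self: "(x::nat) < n \<Longrightarrow> (n - x) mod n = (if x = 0 then 0 else n - x)"
  by auto

lemma mod_diff_self_involutive: "(x::nat) < n \<Longrightarrow> (n - (n - x) mod n) mod n = x"
  by (simp add: mod_diff_self)

lemma mod_diff_self_eq_iff: "(x::nat) < n \<Longrightarrow> y < n \<Longrightarrow> (n - x) mod n = y \<longleftrightarrow> (n - y) mod n = x"
  by (simp add: mod_diff_self) linarith

lemma mod_diff_self_eq_add_iff:
  "(x::nat) < n \<Longrightarrow> y < n \<Longrightarrow> k < n \<Longrightarrow> (n - x) mod n = (y+k) mod n \<longleftrightarrow> (n - y) mod n = (x+k) mod n"
  by (simp add: mod_diff_self mod_add_less_double) linarith

lemma mult_mod_add_mod:
  fixes k :: int
  shows "(k * int ((x + y) mod n)) mod int n = (k * int x + k * int y) mod int n"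
proof -
  have "(k * int ((x + y) mod n)) mod int n = (k * ((int x + int y) mod int n)) mod int n"
    by (simp add: zmod_int)
  also have "\<dots> = (k * int x + k * int y) mod int n"
    by (simp add: mod_mult_right_eq distrib_left)
  finally show ?thesis .
qed

lemma prefix_sum_step:
  fixes c :: "nat \<Rightarrow> bit"
  assumes "(\<Sum>l<n. c l) = 0" "k < n"
  shows "(\<Sum>l\<le>k. c l) + (\<Sum>l\<le>(k+n-1) mod n. c l) = c k"
proof (cases k)
  case 0
  then have "(k+n-1) mod n = n - 1" "{..n-1} = {..<n}" using assms(2) by auto
  then show ?thesis using assms(1) 0 by simp
next
  case (Suc k')
  then have "(k+n-1) mod n = k'" using assms(2) by (simp add: mod_add_diff)
  then show ?thesis using Suc by simp
qed

lemma sum_mod_rotate: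
  assumes "k \<le> n" "0 < (n::nat)"
  shows "(\<Sum>j<n. h ((j+k) mod n)) = (\<Sum>j<n. h j)"
proof -
  have inj: "inj_on (\<lambda>j. (j+k) mod n) {..<n}"
    unfolding inj_on_def using assms by (auto simp: mod_add_less_double split: if_splits)
  then have "(\<lambda>j. (j+k) mod n) ` {..<n} = {..<n}"
    using assms by (intro endo_inj_surj) auto
  with inj have "bij_betw (\<lambda>j. (j+k) mod n) {..<n} {..<n}" by (simp add: bij_betw_def)
  then show ?thesis by (rule sum.reindex_bij_betw)
qed

lemma card_bij_lessThan_less:
  assumes inj: "inj_on g {..<n}" and img: "g ` {..<n} \<subseteq> {..<n}" and l: "l \<le> n"
  shows "card {k. k < n \<and> g k < l} = l"
proof -
  have surj: "g ` {..<n} = {..<n}" using inj img by (intro endo_inj_surj) auto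
  have "g ` {k. k < n \<and> g k < l} = {..<l}"
  proof
    show "{..<l} \<subseteq> g ` {k. k < n \<and> g k < l}"
    proof
      fix r assume r: "r \<in> {..<l}"
      then obtain k where "k < n" "r = g k" using surj l by (metis imageE lessThan_iff order_less_le_trans)
      then show "r \<in> g ` {k. k < n \<and> g k < l}" using r by auto
    qed
  qed auto
  moreover have "inj_on g {k. k < n \<and> g k < l}" using inj by (rule inj_on_subset) auto
  ultimately show ?thesis using card_image[of g "{k. k < n \<and> g k < l}"] by simp
qed

lemma card_affine_mod_less:
  fixes \<alpha> \<beta> :: int
  assumes "coprime \<alpha> (int n)" "0 < n" "l \<le> n"
  shows "card {j. j < n \<and> (\<alpha> * int j + \<beta>) mod int n < int l} = l"
proof -
  define g where "g j = nat ((\<alpha> * int j + \<beta>) mod int n)" for j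
  have "inj_on g {..<n}"
  proof (rule inj_onI)
    fix x y assume xy: "x \<in> {..<n}" "y \<in> {..<n}" "g x = g y"
    then have "(\<alpha> * int x + \<beta>) mod int n = (\<alpha> * int y + \<beta>) mod int n"
      unfolding g_def using assms by (simp add: nat_eq_iff2)
    then have "int n dvd \<alpha> * (int x - int y)"
      by (simp add: mod_eq_dvd_iff algebra_simps)
    then have "int n dvd int x - int y"
      using assms(1) by (simp add: coprime_commute coprime_dvd_mult_right_iff)
    then have "int x mod int n = int y mod int n" by (simp add: mod_eq_dvd_iff)
    then show "x = y" using xy by simp
  qed
  moreover have "g ` {..<n} \<subseteq> {..<n}" unfolding g_def using assms by (auto simp: nat_less_iff)
  ultimately have "card {j. j < n \<and> g j < l} = l" using assms by (intro card_bij_lessThan_less)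
  moreover have "g j < l \<longleftrightarrow> (\<alpha> * int j + \<beta>) mod int n < int l" for j
    unfolding g_def using assms by (simp add: nat_less_iff)
  ultimately show ?thesis by simp
qed

definition in_cyclic_interval :: "nat \<Rightarrow> int \<Rightarrow> nat \<Rightarrow> int \<Rightarrow> bool" where
  "in_cyclic_interval n \<beta> l \<theta> \<longleftrightarrow> (\<theta> - \<beta> - 1) mod int n < int l"

definition interval_joins :: "nat \<Rightarrow> int \<Rightarrow> nat \<Rightarrow> int \<Rightarrow> int \<Rightarrow> bool" where
  "interval_joins n \<beta> l p q \<longleftrightarrow>
     0 < l \<and> l < n \<and> {\<beta> mod int n, (\<beta> + int l) mod int n} = {p mod int n, q mod int n}"

lemma card_in_cyclic_interval:
  assumes "0 < n" "l \<le> n"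
  shows "card {\<theta>. \<theta> < n \<and> in_cyclic_interval n \<beta> l (int \<theta>)} = l"
  using card_affine_mod_less[of 1 n l "- \<beta> - 1"] assms
  by (simp add: in_cyclic_interval_def algebra_simps)

lemma in_cyclic_interval_step:
  fixes \<theta> \<beta> :: int
  assumes "0 < l" "l < n"
  shows "(of_bool (in_cyclic_interval n \<beta> l \<theta>) :: bit) + of_bool (in_cyclic_interval n \<beta> l (\<theta> + 1))
       = of_bool (\<theta> mod int n = \<beta> mod int n) + of_bool (\<theta> mod int n = (\<beta> + int l) mod int n)"
proof -
  define r where "r = (\<theta> - \<beta>) mod int n"
  have r: "0 \<le> r" "r < int n" unfolding r_def using assms by auto
  have shifted: "(\<theta> + 1 - \<beta> - 1) mod int n = r" unfolding r_def by simp
  have "(\<theta> - \<beta> - 1) mod int n = (r - 1) mod int n" unfolding r_def by (simp add: mod_diff_left_eq)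
  also have "\<dots> = (if r = 0 then int n - 1 else r - 1)"
  proof (cases "r = 0")
    case True
    then show ?thesis using assms by (simp add: zmod_minus1)
  next
    case False
    then show ?thesis using r by (simp add: mod_pos_pos_trivial)
  qed
  finally have unshifted: "(\<theta> - \<beta> - 1) mod int n = (if r = 0 then int n - 1 else r - 1)" .
  have "\<theta> mod int n = \<beta> mod int n \<longleftrightarrow> r = 0"
    unfolding r_def by (simp add: mod_eq_dvd_iff dvd_eq_mod_eq_0)
  moreover have "\<theta> mod int n = (\<beta> + int l) mod int n \<longleftrightarrow> (\<theta> - \<beta>) mod int n = int l mod int n"
    by (simp add: mod_eq_dvd_iff algebra_simps)
  moreover have "int l mod int n = int l" using assms by simp
  ultimately show ?thesis
    unfolding in_cyclic_interval_def shifted unshifted r_def[symmetric] using assms r by auto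
qed

lemma interval_joins_step:
  assumes "interval_joins n \<beta> l p q"
  shows "(of_bool (in_cyclic_interval n \<beta> l \<theta>) :: bit) + of_bool (in_cyclic_interval n \<beta> l (\<theta> + 1))
       = of_bool (\<theta> mod int n = p mod int n) + of_bool (\<theta> mod int n = q mod int n)"
proof -
  have l: "0 < l" "l < n" using assms unfolding interval_joins_def by auto
  from assms consider
      "\<beta> mod int n = p mod int n" "(\<beta> + int l) mod int n = q mod int n"
    | "\<beta> mod int n = q mod int n" "(\<beta> + int l) mod int n = p mod int n"
    unfolding interval_joins_def doubleton_eq_iff by blast
  then show ?thesis
  proof cases
    case 1
    then show ?thesis by (simp only: in_cyclic_interval_step[OF l])
  next
    case 2
    then show ?thesis by (simp only: in_cyclic_interval_step[OF l]) (rule add.commute)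
  qed
qed

definition dot :: "nat \<Rightarrow> (nat \<Rightarrow> bit) \<Rightarrow> (nat \<Rightarrow> bit) \<Rightarrow> bit" where
  "dot N x y = (\<Sum>j<N. x j * y j)"

lemma dot_commute: "dot N x y = dot N y x"
  unfolding dot_def by (simp add: mult.commute)

lemma dot_add_right: "dot N c (\<lambda>j. x j + y j) = dot N c x + dot N c y"
  unfolding dot_def by (simp add: distrib_left sum.distrib)

lemma dot_sum_right: "dot N c (\<lambda>j. \<Sum>i\<in>I. H i j) = (\<Sum>i\<in>I. dot N c (H i))"
  unfolding dot_def by (simp add: sum_distrib_left sum.swap[of _ I])

lemma f2span_mono: "S \<subseteq> T \<Longrightarrow> f2span S \<subseteq> f2span T"
  unfolding f2span_def by blast

lemma in_f2span: "v \<in> S \<Longrightarrow> v \<in> f2span S"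
  unfolding f2span_def mem_Collect_eq by (intro exI[of _ "{v}"]) auto

lemma zero_in_f2span: "(\<lambda>_. 0) \<in> f2span S"
  unfolding f2span_def mem_Collect_eq by (intro exI[of _ "{}"]) auto

lemma f2span_add:
  assumes "x \<in> f2span S" "y \<in> f2span S"
  shows "(\<lambda>j. x j + y j) \<in> f2span S"
proof -
  obtain R R' where R: "finite R" "R \<subseteq> S" "x = (\<lambda>j. \<Sum>r\<in>R. r j)"
    and R': "finite R'" "R' \<subseteq> S" "y = (\<lambda>j. \<Sum>r\<in>R'. r j)"
    using assms unfolding f2span_def by blast
  then have "(\<lambda>j. x j + y j) = (\<lambda>j. \<Sum>r\<in>(R - R') \<union> (R' - R). r j)"
    by (simp add: sum_symdiff_bit)
  moreover have "finite ((R - R') \<union> (R' - R))" "(R - R') \<union> (R' - R) \<subseteq> S" using R R' by auto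
  ultimately show ?thesis unfolding f2span_def by blast
qed

lemma f2span_insert:
  assumes "v \<in> f2span S"
  shows "f2span (insert v S) = f2span S"
proof
  show "f2span (insert v S) \<subseteq> f2span S"
  proof
    fix x assume "x \<in> f2span (insert v S)"
    then obtain R where R: "finite R" "R \<subseteq> insert v S" "x = (\<lambda>j. \<Sum>r\<in>R. r j)"
      unfolding f2span_def by blast
    have rest: "(\<lambda>j. \<Sum>r\<in>R - {v}. r j) \<in> f2span S"
      using R unfolding f2span_def by blast
    show "x \<in> f2span S"
    proof (cases "v \<in> R")
      case True
      then have "x = (\<lambda>j. v j + (\<Sum>r\<in>R - {v}. r j))" using R by (simp add: sum.remove)
      then show ?thesis using f2span_add[OF assms rest] by simp
    next
      case False
      then show ?thesis using R rest by simp
    qed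
  qed
qed (rule f2span_mono, blast)

lemma f2span_image:
  assumes "inj_on H A"
  shows "f2span (H ` A) = {(\<lambda>j. \<Sum>i\<in>I. H i j) | I. finite I \<and> I \<subseteq> A}"
proof -
  have "(\<lambda>j. \<Sum>r\<in>H ` I. r j) = (\<lambda>j. \<Sum>i\<in>I. H i j)" if "I \<subseteq> A" for I
    using inj_on_subset[OF assms that] by (simp add: sum.reindex)
  moreover have "finite (H ` I) \<longleftrightarrow> finite I" if "I \<subseteq> A" for I
    using inj_on_subset[OF assms that] by (simp add: finite_image_iff)
  ultimately show ?thesis
    unfolding f2span_def by (auto simp: subset_image_iff) (metis subset_image_iff)
qed

lemma dot_f2span_eq_0:
  assumes "\<And>s. s \<in> S \<Longrightarrow> dot N c s = 0" "v \<in> f2span S"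
  shows "dot N c v = 0"
  using assms unfolding f2span_def by (auto simp: dot_sum_right[where H = id, simplified] subset_iff)

lemma f2span_subset_sums: "f2span B \<subseteq> (\<lambda>R. (\<lambda>j. \<Sum>r\<in>R. r j)) ` Pow B"
  unfolding f2span_def by auto

lemma finite_f2span: "finite B \<Longrightarrow> finite (f2span B)"
  using f2span_subset_sums finite_subset by blast

lemma card_f2span_le:
  assumes "finite B"
  shows "card (f2span B) \<le> 2 ^ card B"
proof -
  have "card (f2span B) \<le> card ((\<lambda>R. (\<lambda>j. \<Sum>r\<in>R. r j)) ` Pow B)"
    using assms f2span_subset_sums by (intro card_mono) auto
  also have "\<dots> \<le> card (Pow B)" by (rule card_image_le) (simp add: assms)
  finally show ?thesis using assms by (simp add: card_Pow)
qed

lemma f2rank_eqI: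
  assumes "finite B" "f2span B = f2span (H ` {..<m})" "2 ^ card B \<le> card (f2span B)"
  shows "f2rank H m = card B"
  unfolding f2rank_def
proof (rule Least_equality)
  show "\<exists>B'. finite B' \<and> card B' = card B \<and> f2span B' = f2span (H ` {..<m})"
    using assms by blast
  fix k assume "\<exists>B'. finite B' \<and> card B' = k \<and> f2span B' = f2span (H ` {..<m})"
  then obtain B' where "finite B'" "card B' = k" "f2span B' = f2span B" using assms by auto
  then have "(2::nat) ^ card B \<le> 2 ^ k" using assms(3) card_f2span_le by (metis order_trans)
  then show "card B \<le> k" by simp
qed

lemma f2rank_single_relation:
  fixes H :: "nat \<Rightarrow> nat \<Rightarrow> bit"
  assumes "2 \<le> n" and inj: "inj_on H {..<n}" and total: "\<And>J. (\<Sum>i<n. H i J) = 0"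
    and indep: "\<And>K. K \<subseteq> {..<n-1} \<Longrightarrow> (\<And>J. (\<Sum>i\<in>K. H i J) = 0) \<Longrightarrow> K = {}"
  shows "f2rank H n = n - 1"
proof -
  define B where "B = H ` {..<n-1}"
  have inj': "inj_on H {..<n-1}" using inj by (rule inj_on_subset) auto
  have rows: "{..<n} = insert (n-1) {..<n-1}" using assms(1) by auto
  have "H (n-1) = (\<lambda>J. \<Sum>i<n-1. H i J)"
  proof
    fix J
    show "H (n-1) J = (\<Sum>i<n-1. H i J)" using total[of J] rows by (simp add: bit_add_eq_0_iff)
  qed
  then have "H (n-1) \<in> f2span B" unfolding B_def f2span_image[OF inj'] by blast
  moreover have "H ` {..<n} = insert (H (n-1)) B" unfolding B_def rows by simp
  ultimately have span: "f2span B = f2span (H ` {..<n})" by (simp add: f2span_insert)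
  define F where "F I = (\<lambda>J. \<Sum>i\<in>I. H i J)" for I
  have "inj_on F (Pow {..<n-1})"
  proof (rule inj_onI)
    fix I I' assume II: "I \<in> Pow {..<n-1}" "I' \<in> Pow {..<n-1}" "F I = F I'"
    have fin: "finite I" "finite I'" using II finite_subset by auto
    have "(\<Sum>i\<in>(I - I') \<union> (I' - I). H i J) = 0" for J
      using fun_cong[OF II(3), of J] sum_symdiff_bit[OF fin, of "\<lambda>i. H i J"]
      unfolding F_def by (simp add: bit_add_eq_0_iff)
    then have "(I - I') \<union> (I' - I) = {}" using II by (intro indep) auto
    then show "I = I'" by auto
  qed
  then have "card (F ` Pow {..<n-1}) = 2 ^ (n-1)" by (simp add: card_image card_Pow)
  moreover have "F ` Pow {..<n-1} \<subseteq> f2span B"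
    unfolding B_def f2span_image[OF inj'] F_def by (auto intro: finite_subset)
  moreover have "finite (f2span B)" unfolding B_def by (simp add: finite_f2span)
  moreover have card: "card B = n - 1" unfolding B_def using inj' by (simp add: card_image)
  ultimately have "2 ^ card B \<le> card (f2span B)" by (metis card_mono)
  then show ?thesis using span f2rank_eqI[of B H n] card unfolding B_def by simp
qed

locale gb_twisted_torus =
  fixes m :: nat
  assumes m_pos: "1 \<le> m"
begin

definition n :: nat where "n = 2*m*m + 2*m + 1"

definition d :: nat where "d = 2*m + 1"

definition a :: "nat \<Rightarrow> bit" where "a k = of_bool (k = 0 \<or> k = 1)"

definition b :: "nat \<Rightarrow> bit" where "b k = of_bool (k = 0 \<or> k = d)"

abbreviation HX where "HX \<equiv> hx_row n a b"

abbreviation HZ where "HZ \<equiv> hz_row n a b"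

lemma d_ge_3: "3 \<le> d"
  using m_pos unfolding d_def by simp

lemma Suc_m_mult_2m_less_n: "(m+1) * (2*m) < n"
  unfolding n_def by (simp add: algebra_simps)

lemma d_succ_less_n: "d + 1 < n"
proof -
  have "1 \<le> m*m" using mult_le_mono[OF m_pos m_pos] by simp
  then show ?thesis unfolding n_def d_def mult.assoc by linarith
qed

lemma d_less_n: "d < n"
  using d_succ_less_n by simp

lemma n_ge_5: "5 \<le> n"
  using d_succ_less_n d_ge_3 by simp

lemma odd_n: "odd n"
  unfolding n_def by simp

lemma d_sq: "d^2 + 1 = 2*n"
  unfolding n_def d_def by (simp add: power2_eq_square algebra_simps)

lemma mod_n_less [simp]: "x mod n < n"
  using n_ge_5 by simp

lemma neq_succ: "x < n \<Longrightarrow> x \<noteq> (x+1) mod n"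
  using n_ge_5 by (auto simp: mod_Suc)

lemma neq_add_d: "x < n \<Longrightarrow> x \<noteq> (x+d) mod n"
  using d_less_n d_ge_3 by (auto simp: mod_add_less_double)

lemma neq_pred: "x < n \<Longrightarrow> x \<noteq> (x+n-1) mod n"
  using n_ge_5 by (auto simp: mod_add_diff)

lemma neq_sub_d: "x < n \<Longrightarrow> x \<noteq> (x+n-d) mod n"
  using d_less_n d_ge_3 by (auto simp: mod_add_diff)

lemma hx_fst: "i < n \<Longrightarrow> j < n \<Longrightarrow> HX i j = of_bool (j = i \<or> j = (i+1) mod n)"
  unfolding hx_row_def a_def using n_ge_5 nat_mod_diff_eq_iff[of j n i 0] nat_mod_diff_eq_iff[of j n i 1]
  by auto

lemma hx_snd: "i < n \<Longrightarrow> j < n \<Longrightarrow> HX i (n+j) = of_bool (j = i \<or> j = (i+d) mod n)"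
  unfolding hx_row_def b_def using n_ge_5 d_less_n nat_mod_diff_eq_iff[of j n i 0] nat_mod_diff_eq_iff[of j n i d]
  by auto

lemma hz_fst: "i < n \<Longrightarrow> j < n \<Longrightarrow> HZ i j = of_bool (i = j \<or> i = (j+d) mod n)"
  unfolding hz_row_def b_def using n_ge_5 d_less_n nat_mod_diff_eq_iff[of i n j 0] nat_mod_diff_eq_iff[of i n j d]
  by auto

lemma hz_snd: "i < n \<Longrightarrow> j < n \<Longrightarrow> HZ i (n+j) = of_bool (i = j \<or> i = (j+1) mod n)"
  unfolding hz_row_def a_def using n_ge_5 nat_mod_diff_eq_iff[of i n j 0] nat_mod_diff_eq_iff[of i n j 1]
  by auto

lemma hx_out: "2*n \<le> j \<Longrightarrow> HX i j = 0"
  unfolding hx_row_def by auto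

lemma hz_out: "2*n \<le> j \<Longrightarrow> HZ i j = 0"
  unfolding hz_row_def by auto

lemma hx_fst_col: "i < n \<Longrightarrow> j < n \<Longrightarrow> HX i j = of_bool (i = j \<or> i = (j+n-1) mod n)"
  using hx_fst eq_mod_add_iff[of j n i 1] n_ge_5 by auto

lemma hx_snd_col: "i < n \<Longrightarrow> j < n \<Longrightarrow> HX i (n+j) = of_bool (i = j \<or> i = (j+n-d) mod n)"
  using hx_snd eq_mod_add_iff[of j n i d] d_less_n by auto

lemma hz_fst_row: "i < n \<Longrightarrow> j < n \<Longrightarrow> HZ i j = of_bool (j = i \<or> j = (i+n-d) mod n)"
  using hz_fst eq_mod_add_iff[of i n j d] d_less_n by auto

lemma hz_snd_row: "i < n \<Longrightarrow> j < n \<Longrightarrow> HZ i (n+j) = of_bool (j = i \<or> j = (i+n-1) mod n)"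
  using hz_snd eq_mod_add_iff[of i n j 1] n_ge_5 by auto

lemma ring_elem_a: "ring_elem n a"
  unfolding ring_elem_def f2vec_def a_def using n_ge_5 by auto

lemma ring_elem_b: "ring_elem n b"
  unfolding ring_elem_def f2vec_def b_def using d_less_n by auto

lemma dot_hx:
  assumes "i < n"
  shows "dot (2*n) c (HX i) = c i + c ((i+1) mod n) + c (n+i) + c (n + (i+d) mod n)"
proof -
  have "dot (2*n) c (HX i) = (\<Sum>j<n. c j * HX i j) + (\<Sum>j<n. c (n+j) * HX i (n+j))"
    unfolding dot_def by (rule sum_lessThan_double)
  also have "(\<Sum>j<n. c j * HX i j) = (\<Sum>j<n. c j * of_bool (j = i \<or> j = (i+1) mod n))"
    using assms by (intro sum.cong) (auto simp: hx_fst)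
  also have "\<dots> = c i + c ((i+1) mod n)"
    using assms neq_succ by (intro sum_mult_of_bool_two_points) auto
  also have "(\<Sum>j<n. c (n+j) * HX i (n+j)) = (\<Sum>j<n. c (n+j) * of_bool (j = i \<or> j = (i+d) mod n))"
    using assms by (intro sum.cong) (auto simp: hx_snd)
  also have "\<dots> = c (n+i) + c (n + (i+d) mod n)"
    using assms neq_add_d by (intro sum_mult_of_bool_two_points[where c="\<lambda>j. c (n+j)"]) auto
  finally show ?thesis by (simp add: add.assoc)
qed

lemma dot_hz:
  assumes "i < n"
  shows "dot (2*n) c (HZ i) = c i + c ((i+n-d) mod n) + c (n+i) + c (n + (i+n-1) mod n)"
proof -
  have "dot (2*n) c (HZ i) = (\<Sum>j<n. c j * HZ i j) + (\<Sum>j<n. c (n+j) * HZ i (n+j))"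
    unfolding dot_def by (rule sum_lessThan_double)
  also have "(\<Sum>j<n. c j * HZ i j) = (\<Sum>j<n. c j * of_bool (j = i \<or> j = (i+n-d) mod n))"
    using assms by (intro sum.cong) (auto simp: hz_fst_row)
  also have "\<dots> = c i + c ((i+n-d) mod n)"
    using assms neq_sub_d by (intro sum_mult_of_bool_two_points) auto
  also have "(\<Sum>j<n. c (n+j) * HZ i (n+j)) = (\<Sum>j<n. c (n+j) * of_bool (j = i \<or> j = (i+n-1) mod n))"
    using assms by (intro sum.cong) (auto simp: hz_snd_row)
  also have "\<dots> = c (n+i) + c (n + (i+n-1) mod n)"
    using assms neq_pred by (intro sum_mult_of_bool_two_points[where c="\<lambda>j. c (n+j)"]) auto
  finally show ?thesis by (simp add: add.assoc)
qed

lemma hx_dot_hz: "i < n \<Longrightarrow> k < n \<Longrightarrow> dot (2*n) (HX i) (HZ k) = 0"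
proof -
  assume i: "i < n" and k: "k < n"
  define v w x where "v = (i+1) mod n" and "w = (i+d) mod n" and "x = (i+d+1) mod n"
  have "v \<noteq> i" "w \<noteq> i" "w \<noteq> v" "x \<noteq> v" "x \<noteq> w"
    unfolding v_def w_def x_def using i d_ge_3 d_succ_less_n
    by (auto simp: mod_add_less_double mod_Suc split: if_splits)
  have "(v + d) mod n = x" "(w + 1) mod n = x"
    unfolding v_def w_def x_def by (simp_all add: mod_add_right_eq mod_Suc_eq add.commute)
  moreover have "v < n" "w < n" unfolding v_def w_def by simp_all
  ultimately have "HZ k i = of_bool (k = i) + of_bool (k = w)"
    and "HZ k v = of_bool (k = v) + of_bool (k = x)"
    and "HZ k (n+i) = of_bool (k = i) + of_bool (k = v)"
    and "HZ k (n+w) = of_bool (k = w) + of_bool (k = x)"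
    using hz_fst[OF k i] hz_fst[OF k \<open>v < n\<close>] hz_snd[OF k i] hz_snd[OF k \<open>w < n\<close>]
      \<open>v \<noteq> i\<close> \<open>w \<noteq> i\<close> \<open>x \<noteq> v\<close> \<open>x \<noteq> w\<close>
    unfolding v_def[symmetric] w_def[symmetric] by (simp_all add: of_bool_disj_distinct)
  then show ?thesis
    unfolding dot_commute[of _ "HX i"] dot_hx[OF i] v_def[symmetric] w_def[symmetric]
    by (simp add: ac_simps)
qed

lemma sum_hx_fst:
  assumes "K \<subseteq> {..<n}" "j < n"
  shows "(\<Sum>i\<in>K. HX i j) = of_bool (j \<in> K) + of_bool ((j+n-1) mod n \<in> K)"
proof -
  have "(\<Sum>i\<in>K. HX i j) = (\<Sum>i\<in>K. of_bool (i = j \<or> i = (j+n-1) mod n))"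
    using assms by (intro sum.cong) (auto simp: hx_fst_col)
  then show ?thesis using sum_of_bool_two_points[OF neq_pred[OF assms(2)] finite_subset[OF assms(1)]] by simp
qed

lemma sum_hx_snd:
  assumes "K \<subseteq> {..<n}" "j < n"
  shows "(\<Sum>i\<in>K. HX i (n+j)) = of_bool (j \<in> K) + of_bool ((j+n-d) mod n \<in> K)"
proof -
  have "(\<Sum>i\<in>K. HX i (n+j)) = (\<Sum>i\<in>K. of_bool (i = j \<or> i = (j+n-d) mod n))"
    using assms by (intro sum.cong) (auto simp: hx_snd_col)
  then show ?thesis using sum_of_bool_two_points[OF neq_sub_d[OF assms(2)] finite_subset[OF assms(1)]] by simp
qed

lemma sum_hz_fst:
  assumes "K \<subseteq> {..<n}" "j < n"
  shows "(\<Sum>i\<in>K. HZ i j) = of_bool (j \<in> K) + of_bool ((j+d) mod n \<in> K)"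
proof -
  have "(\<Sum>i\<in>K. HZ i j) = (\<Sum>i\<in>K. of_bool (i = j \<or> i = (j+d) mod n))"
    using assms by (intro sum.cong) (auto simp: hz_fst)
  then show ?thesis using sum_of_bool_two_points[OF neq_add_d[OF assms(2)] finite_subset[OF assms(1)]] by simp
qed

lemma sum_hz_snd:
  assumes "K \<subseteq> {..<n}" "j < n"
  shows "(\<Sum>i\<in>K. HZ i (n+j)) = of_bool (j \<in> K) + of_bool ((j+1) mod n \<in> K)"
proof -
  have "(\<Sum>i\<in>K. HZ i (n+j)) = (\<Sum>i\<in>K. of_bool (i = j \<or> i = (j+1) mod n))"
    using assms by (intro sum.cong) (auto simp: hz_snd)
  then show ?thesis using sum_of_bool_two_points[OF neq_succ[OF assms(2)] finite_subset[OF assms(1)]] by simp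
qed

lemma regular_hx: "regular_2_4 n HX"
  unfolding regular_2_4_def
proof (intro conjI allI impI)
  fix i assume i: "i < n"
  have "card {j. j < n \<and> HX i j \<noteq> 0} = 2"
    using neq_succ[OF i] i by (intro card_two_points) (auto simp: hx_fst)
  moreover have "card {j. j < n \<and> HX i (n+j) \<noteq> 0} = 2"
    using neq_add_d[OF i] i by (intro card_two_points[where f="\<lambda>j. HX i (n+j)"]) (auto simp: hx_snd)
  ultimately show "card {j. j < 2*n \<and> HX i j \<noteq> 0} = 4"
    by (simp add: card_lessThan_double)
next
  fix J assume "J < 2*n"
  then show "card {i. i < n \<and> HX i J \<noteq> 0} = 2"
  proof (cases J n rule: block_cases)
    case fst
    then show ?thesis using neq_pred[OF fst] by (intro card_two_points) (auto simp: hx_fst_col)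
  next
    case (snd j)
    then show ?thesis using neq_sub_d[of j] by (intro card_two_points) (auto simp: hx_snd_col)
  qed simp
qed

lemma regular_hz: "regular_2_4 n HZ"
  unfolding regular_2_4_def
proof (intro conjI allI impI)
  fix i assume i: "i < n"
  have "card {j. j < n \<and> HZ i j \<noteq> 0} = 2"
    using neq_sub_d[OF i] i by (intro card_two_points) (auto simp: hz_fst_row)
  moreover have "card {j. j < n \<and> HZ i (n+j) \<noteq> 0} = 2"
    using neq_pred[OF i] i by (intro card_two_points[where f="\<lambda>j. HZ i (n+j)"]) (auto simp: hz_snd_row)
  ultimately show "card {j. j < 2*n \<and> HZ i j \<noteq> 0} = 4"
    by (simp add: card_lessThan_double)
next
  fix J assume "J < 2*n"
  then show "card {i. i < n \<and> HZ i J \<noteq> 0} = 2"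
  proof (cases J n rule: block_cases)
    case fst
    then show ?thesis using neq_add_d[OF fst] by (intro card_two_points) (auto simp: hz_fst)
  next
    case (snd j)
    then show ?thesis using neq_succ[of j] by (intro card_two_points) (auto simp: hz_snd)
  qed simp
qed

lemma inj_hx: "inj_on HX {..<n}"
proof (rule inj_onI)
  fix i i' assume i: "i \<in> {..<n}" "i' \<in> {..<n}" and eq: "HX i = HX i'"
  have "HX i i = 1" "HX i (n+i) = 1" using i by (simp_all add: hx_fst hx_snd)
  then have "HX i' i = 1" "HX i' (n+i) = 1" using eq by simp_all
  then have "i = i' \<or> i = (i'+1) mod n" "i = i' \<or> i = (i'+d) mod n" using i by (auto simp: hx_fst hx_snd)
  then show "i = i'" using i d_less_n d_ge_3 by (auto simp: mod_add_less_double mod_Suc split: if_splits)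
qed

lemma inj_hz: "inj_on HZ {..<n}"
proof (rule inj_onI)
  fix i i' assume i: "i \<in> {..<n}" "i' \<in> {..<n}" and eq: "HZ i = HZ i'"
  have "HZ i i = 1" "HZ i (n+i) = 1" using i by (simp_all add: hz_fst hz_snd)
  then have "HZ i' i = 1" "HZ i' (n+i) = 1" using eq by simp_all
  then have "i' = i \<or> i' = (i+d) mod n" "i' = i \<or> i' = (i+1) mod n" using i by (auto simp: hz_fst hz_snd)
  then show "i = i'" using i d_less_n d_ge_3 by (auto simp: mod_add_less_double mod_Suc split: if_splits)
qed

lemma f2span_hx: "f2span (HX ` {..<n}) = {(\<lambda>j. \<Sum>i\<in>I. HX i j) | I. I \<subseteq> {..<n}}"
  unfolding f2span_image[OF inj_hx] by (auto intro: finite_subset)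

lemma f2span_hz: "f2span (HZ ` {..<n}) = {(\<lambda>j. \<Sum>i\<in>I. HZ i j) | I. I \<subseteq> {..<n}}"
  unfolding f2span_image[OF inj_hz] by (auto intro: finite_subset)

lemma sum_all_hx: "(\<Sum>i<n. HX i J) = 0"
  by (cases J n rule: block_cases) (simp_all add: sum_hx_fst sum_hx_snd hx_out)

lemma sum_all_hz: "(\<Sum>i<n. HZ i J) = 0"
  by (cases J n rule: block_cases) (simp_all add: sum_hz_fst sum_hz_snd hz_out)

lemma f2rank_hx: "f2rank HX n = n - 1"
proof (rule f2rank_single_relation[OF _ inj_hx sum_all_hx])
  show "2 \<le> n" using n_ge_5 by simp
  fix K assume K: "K \<subseteq> {..<n-1}" and zero: "\<And>J. (\<Sum>i\<in>K. HX i J) = 0"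
  then have K': "K \<subseteq> {..<n}" by auto
  have shift: "j \<in> K \<longleftrightarrow> (j+n-1) mod n \<in> K" if "j < n" for j
    using zero[of j] sum_hx_fst[OF K' that] by (simp add: bit_add_eq_0_iff of_bool_eq_iff)
  have "j \<notin> K" if "j < n" for j
    using that
  proof (induction j)
    case 0
    then show ?case using shift[of 0] K n_ge_5 by auto
  next
    case (Suc j)
    then show ?case using shift[of "Suc j"] by (simp add: mod_add_diff)
  qed
  then show "K = {}" using K' by auto
qed

lemma f2rank_hz: "f2rank HZ n = n - 1"
proof (rule f2rank_single_relation[OF _ inj_hz sum_all_hz])
  show "2 \<le> n" using n_ge_5 by simp
  fix K assume K: "K \<subseteq> {..<n-1}" and zero: "\<And>J. (\<Sum>i\<in>K. HZ i J) = 0"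
  then have K': "K \<subseteq> {..<n}" by auto
  have shift: "j \<in> K \<longleftrightarrow> (j+1) mod n \<in> K" if "j < n" for j
    using zero[of "n+j"] sum_hz_snd[OF K' that] by (simp add: bit_add_eq_0_iff of_bool_eq_iff)
  have "j \<notin> K" if "j < n" for j
    using that
  proof (induction j)
    case 0
    then show ?case using shift[of "n-1"] K n_ge_5 by auto
  next
    case (Suc j)
    then show ?case using shift[of j] by simp
  qed
  then show "K = {}" using K' by auto
qed

lemma gb_dim_eq_2: "gb_dim n a b = 2"
  unfolding gb_dim_def f2rank_hx f2rank_hz using n_ge_5 by simp

definition fst_block :: "nat \<Rightarrow> bit" where "fst_block J = of_bool (J < n)"

definition snd_block :: "nat \<Rightarrow> bit" where "snd_block J = of_bool (n \<le> J \<and> J < 2*n)"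

lemma dot_fst_block: "dot (2*n) fst_block c = (\<Sum>j<n. c j)"
  unfolding dot_def fst_block_def sum_lessThan_double by simp

lemma dot_snd_block: "dot (2*n) snd_block c = (\<Sum>j<n. c (n+j))"
  unfolding dot_def snd_block_def sum_lessThan_double by simp

lemma f2span_hx_dot_blocks:
  assumes "v \<in> f2span (HX ` {..<n})"
  shows "dot (2*n) fst_block v = 0" "dot (2*n) snd_block v = 0"
proof -
  have fst: "dot (2*n) fst_block (HX i) = 0" if "i < n" for i
    unfolding dot_fst_block by (rule sum_two_points_eq_0[OF neq_succ[OF that] that]) (simp_all add: hx_fst that)
  have snd: "dot (2*n) snd_block (HX i) = 0" if "i < n" for i
    unfolding dot_snd_block by (rule sum_two_points_eq_0[OF neq_add_d[OF that] that]) (simp_all add: hx_snd that)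
  show "dot (2*n) fst_block v = 0" using fst by (intro dot_f2span_eq_0[OF _ assms]) auto
  show "dot (2*n) snd_block v = 0" using snd by (intro dot_f2span_eq_0[OF _ assms]) auto
qed

lemma f2span_hz_dot_blocks:
  assumes "v \<in> f2span (HZ ` {..<n})"
  shows "dot (2*n) fst_block v = 0" "dot (2*n) snd_block v = 0"
proof -
  have fst: "dot (2*n) fst_block (HZ i) = 0" if "i < n" for i
    unfolding dot_fst_block by (rule sum_two_points_eq_0[OF neq_sub_d[OF that] that]) (simp_all add: hz_fst_row that)
  have snd: "dot (2*n) snd_block (HZ i) = 0" if "i < n" for i
    unfolding dot_snd_block by (rule sum_two_points_eq_0[OF neq_pred[OF that] that]) (simp_all add: hz_snd_row that)
  show "dot (2*n) fst_block v = 0" using fst by (intro dot_f2span_eq_0[OF _ assms]) auto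
  show "dot (2*n) snd_block v = 0" using snd by (intro dot_f2span_eq_0[OF _ assms]) auto
qed

lemma pred_of_sub_d:
  assumes "Suc j < n"
  shows "((Suc j + n - d) mod n + n - 1) mod n = (j + n - d) mod n"
proof -
  have "(Suc j + n - d) mod n + n - 1 = (Suc j + n - d) mod n + (n - 1)"
    using assms by arith
  then have "((Suc j + n - d) mod n + n - 1) mod n = (Suc j + n - d + (n - 1)) mod n"
    by (simp only: mod_add_left_eq)
  also have "Suc j + n - d + (n - 1) = (j + n - d) + n"
    using d_less_n by arith
  finally show ?thesis by (simp only: mod_add_self2)
qed

(* The faces to take are those i whose prefix sum c 0 + ... + c i is 1.  This matches c on the
   first block; on the second block the defect g is constant by the star conditions and has zero
   total, so it vanishes because n is odd. *)
lemma cycle_in_f2span_hx: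
  assumes c: "c \<in> f2vec (2*n)"
    and cycle: "\<And>i. i < n \<Longrightarrow> dot (2*n) c (HZ i) = 0"
    and even: "dot (2*n) fst_block c = 0" "dot (2*n) snd_block c = 0"
  shows "c \<in> f2span (HX ` {..<n})"
proof -
  define f where "f k = (\<Sum>l\<le>k. c l)" for k
  define I where "I = {i. i < n \<and> f i = 1}"
  have I: "I \<subseteq> {..<n}" unfolding I_def by auto
  have f_I: "of_bool (i \<in> I) = f i" if "i < n" for i
    using that unfolding I_def by auto
  have f_step: "f k + f ((k+n-1) mod n) = c k" if "k < n" for k
    unfolding f_def using prefix_sum_step[OF even(1)[unfolded dot_fst_block] that] .
  have fst: "(\<Sum>i\<in>I. HX i j) = c j" if "j < n" for j
    using sum_hx_fst[OF I that] f_I[OF that] f_I[of "(j+n-1) mod n"] f_step[OF that] by simp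
  define g where "g j = f j + f ((j+n-d) mod n) + c (n+j)" for j
  have g_step: "g (Suc j) = g j" if j: "Suc j < n" for j
  proof -
    have "(Suc j + n - 1) mod n = j" using j by (simp add: mod_add_diff)
    then have "g (Suc j) + g j = dot (2*n) c (HZ (Suc j))"
      using dot_hz[OF j] f_step[OF j] f_step[of "(Suc j + n - d) mod n"] pred_of_sub_d[OF j]
      unfolding g_def by (simp add: ac_simps)
    then show ?thesis using cycle[OF j] by (simp add: bit_add_eq_0_iff)
  qed
  have g_sum: "(\<Sum>j<n. g j) = 0"
  proof -
    have "(\<Sum>j<n. f ((j+n-d) mod n)) = (\<Sum>j<n. f j)"
      using sum_mod_rotate[of "n-d" n f] d_less_n by simp
    then show ?thesis using even(2) unfolding g_def dot_snd_block by (simp add: sum.distrib)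
  qed
  have snd: "(\<Sum>i\<in>I. HX i (n+j)) = c (n+j)" if "j < n" for j
  proof -
    have "g j = 0" using bit_sum_const_odd[of n g, OF odd_n g_step that] g_sum by simp
    then show ?thesis using sum_hx_snd[OF I that] f_I[OF that] f_I[of "(j+n-d) mod n"]
      unfolding g_def by (simp add: bit_add_eq_0_iff)
  qed
  have "c = (\<lambda>J. \<Sum>i\<in>I. HX i J)"
  proof
    fix J
    show "c J = (\<Sum>i\<in>I. HX i J)"
      using c by (cases J n rule: block_cases) (auto simp: fst snd hx_out f2vec_def)
  qed
  then show ?thesis unfolding f2span_hx using I by blast
qed

(* Edge J crosses the level theta if theta lies in its interval of potentials; these intervals
   start at s1 j and s2 j and have lengths l1 and l2 on the two blocks. *)
definition crosses :: "(nat \<Rightarrow> int) \<Rightarrow> nat \<Rightarrow> (nat \<Rightarrow> int) \<Rightarrow> nat \<Rightarrow> int \<Rightarrow> nat \<Rightarrow> bool" where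
  "crosses s1 l1 s2 l2 \<theta> J \<longleftrightarrow>
     (if J < n then in_cyclic_interval n (s1 J) l1 \<theta>
      else J < 2*n \<and> in_cyclic_interval n (s2 (J - n)) l2 \<theta>)"

definition level_cut :: "(nat \<Rightarrow> int) \<Rightarrow> nat \<Rightarrow> (nat \<Rightarrow> int) \<Rightarrow> nat \<Rightarrow> int \<Rightarrow> nat \<Rightarrow> bit" where
  "level_cut s1 l1 s2 l2 \<theta> J = of_bool (crosses s1 l1 s2 l2 \<theta> J)"

definition edge_intervals :: "(nat \<Rightarrow> int) \<Rightarrow> (nat \<Rightarrow> int) \<Rightarrow> nat \<Rightarrow> (nat \<Rightarrow> int) \<Rightarrow> nat \<Rightarrow> bool" where
  "edge_intervals p s1 l1 s2 l2 \<longleftrightarrow>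
     (\<forall>j<n. interval_joins n (s1 j) l1 (p j) (p ((j+d) mod n))) \<and>
     (\<forall>j<n. interval_joins n (s2 j) l2 (p j) (p ((j+1) mod n)))"

lemma edge_intervals_lengths:
  assumes "edge_intervals p s1 l1 s2 l2"
  shows "0 < l1" "l1 < n" "0 < l2" "l2 < n"
proof -
  have "0 < n" using n_ge_5 by simp
  then show "0 < l1" "l1 < n" "0 < l2" "l2 < n"
    using assms unfolding edge_intervals_def interval_joins_def by blast+
qed

lemma level_cut_step:
  assumes edges: "edge_intervals p s1 l1 s2 l2"
  shows "level_cut s1 l1 s2 l2 \<theta> J + level_cut s1 l1 s2 l2 (\<theta>+1) J
       = (\<Sum>t\<in>{t. t < n \<and> p t mod int n = \<theta> mod int n}. HZ t J)"
proof -
  define T where "T = {t. t < n \<and> p t mod int n = \<theta> mod int n}"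
  have T: "T \<subseteq> {..<n}" unfolding T_def by auto
  have in_T: "of_bool (t \<in> T) = (of_bool (\<theta> mod int n = p t mod int n) :: bit)" if "t < n" for t
    using that unfolding T_def by auto
  have "level_cut s1 l1 s2 l2 \<theta> J + level_cut s1 l1 s2 l2 (\<theta>+1) J = (\<Sum>t\<in>T. HZ t J)"
  proof (cases J n rule: block_cases)
    case fst
    then show ?thesis
      using edges interval_joins_step sum_hz_fst[OF T fst] in_T[OF fst] in_T[of "(J+d) mod n"]
      unfolding level_cut_def crosses_def edge_intervals_def by simp
  next
    case (snd j)
    then show ?thesis
      using edges interval_joins_step sum_hz_snd[OF T snd(1)] in_T[OF snd(1)] in_T[of "(j+1) mod n"]
      unfolding level_cut_def crosses_def edge_intervals_def by simp
  next
    case out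
    then show ?thesis unfolding level_cut_def crosses_def by (simp add: hz_out)
  qed
  then show ?thesis unfolding T_def .
qed

lemma dot_level_cut_succ:
  assumes edges: "edge_intervals p s1 l1 s2 l2"
    and cycle: "\<And>i. i < n \<Longrightarrow> dot (2*n) c (HZ i) = 0"
  shows "dot (2*n) c (level_cut s1 l1 s2 l2 (int (Suc k))) = dot (2*n) c (level_cut s1 l1 s2 l2 (int k))"
proof -
  define T where "T = {t. t < n \<and> p t mod int n = int k mod int n}"
  have "dot (2*n) c (level_cut s1 l1 s2 l2 (int k)) + dot (2*n) c (level_cut s1 l1 s2 l2 (int k + 1))
      = dot (2*n) c (\<lambda>J. \<Sum>t\<in>T. HZ t J)"
    unfolding dot_add_right[symmetric] T_def level_cut_step[OF edges] ..
  also have "\<dots> = 0" unfolding dot_sum_right T_def using cycle by (auto intro: sum.neutral)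
  finally show ?thesis by (simp add: bit_add_eq_0_iff ac_simps)
qed

lemma card_crossing_levels:
  assumes edges: "edge_intervals p s1 l1 s2 l2" and "J < 2*n"
  shows "card {\<theta>. \<theta> < n \<and> crosses s1 l1 s2 l2 (int \<theta>) J} = (if J < n then l1 else l2)"
  using assms(2)
proof (cases J n rule: block_cases)
  case fst
  then show ?thesis
    using edge_intervals_lengths[OF edges] card_in_cyclic_interval[of n l1 "s1 J"]
    unfolding crosses_def by simp
next
  case (snd j)
  then show ?thesis
    using edge_intervals_lengths[OF edges] card_in_cyclic_interval[of n l2 "s2 j"]
    unfolding crosses_def by simp
qed simp

lemma sum_dot_level_cuts:
  assumes edges: "edge_intervals p s1 l1 s2 l2"
  shows "(\<Sum>\<theta><n. dot (2*n) c (level_cut s1 l1 s2 l2 (int \<theta>)))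
       = of_nat l1 * dot (2*n) fst_block c + of_nat l2 * dot (2*n) snd_block c"
proof -
  have "(\<Sum>\<theta><n. dot (2*n) c (level_cut s1 l1 s2 l2 (int \<theta>)))
      = (\<Sum>J<2*n. c J * (\<Sum>\<theta><n. level_cut s1 l1 s2 l2 (int \<theta>) J))"
    unfolding dot_def sum_distrib_left by (rule sum.swap)
  also have "\<dots> = (\<Sum>J<2*n. c J * (of_nat l1 * fst_block J + of_nat l2 * snd_block J))"
  proof (rule sum.cong[OF refl])
    fix J assume "J \<in> {..<2*n}"
    then show "c J * (\<Sum>\<theta><n. level_cut s1 l1 s2 l2 (int \<theta>) J)
             = c J * (of_nat l1 * fst_block J + of_nat l2 * snd_block J)"
      unfolding level_cut_def sum_lessThan_of_bool using card_crossing_levels[OF edges]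
      by (simp add: fst_block_def snd_block_def)
  qed
  finally show ?thesis
    unfolding dot_def by (simp add: algebra_simps sum.distrib sum_distrib_left)
qed

lemma dot_level_cut:
  assumes edges: "edge_intervals p s1 l1 s2 l2"
    and cycle: "\<And>i. i < n \<Longrightarrow> dot (2*n) c (HZ i) = 0"
    and "\<theta> < n"
  shows "dot (2*n) c (level_cut s1 l1 s2 l2 (int \<theta>))
       = of_nat l1 * dot (2*n) fst_block c + of_nat l2 * dot (2*n) snd_block c"
  using bit_sum_const_odd[of n "\<lambda>\<theta>. dot (2*n) c (level_cut s1 l1 s2 l2 (int \<theta>))", OF odd_n]
    dot_level_cut_succ[OF edges cycle] sum_dot_level_cuts[OF edges] assms(3)
  by simp

lemma weight_ge_if_odd_level_cuts:
  assumes edges: "edge_intervals p s1 l1 s2 l2"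
    and cycle: "\<And>i. i < n \<Longrightarrow> dot (2*n) c (HZ i) = 0"
    and "l1 \<le> L" "l2 \<le> L" and odd: "dot (2*n) c (level_cut s1 l1 s2 l2 0) = 1"
  shows "n \<le> L * card {J. J < 2*n \<and> c J \<noteq> 0}"
proof -
  define S where "S = {J. J < 2*n \<and> c J \<noteq> 0}"
  define X where "X \<theta> J = (of_bool (crosses s1 l1 s2 l2 (int \<theta>) J) :: nat)" for \<theta> J
  have hit: "1 \<le> (\<Sum>J\<in>S. X \<theta> J)" if "\<theta> < n" for \<theta>
  proof -
    have one: "dot (2*n) c (level_cut s1 l1 s2 l2 (int \<theta>)) = 1"
      using dot_level_cut[OF edges cycle that] dot_level_cut[OF edges cycle, of 0] odd n_ge_5 by simp
    have "\<exists>J\<in>S. crosses s1 l1 s2 l2 (int \<theta>) J"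
    proof (rule ccontr)
      assume "\<not> ?thesis"
      then have "dot (2*n) c (level_cut s1 l1 s2 l2 (int \<theta>)) = 0"
        unfolding dot_def level_cut_def S_def by (intro sum.neutral) auto
      then show False using one by simp
    qed
    then obtain J where "J \<in> S" "X \<theta> J = 1" unfolding X_def by auto
    moreover have "finite S" unfolding S_def by simp
    ultimately show ?thesis by (metis member_le_sum zero_le)
  qed
  have "n = (\<Sum>\<theta><n. 1::nat)" by simp
  also have "\<dots> \<le> (\<Sum>\<theta><n. \<Sum>J\<in>S. X \<theta> J)" using hit by (intro sum_mono) auto
  also have "\<dots> = (\<Sum>J\<in>S. \<Sum>\<theta><n. X \<theta> J)" by (rule sum.swap)
  also have "\<dots> \<le> (\<Sum>J\<in>S. L)"
  proof (rule sum_mono)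
    fix J assume "J \<in> S"
    then show "(\<Sum>\<theta><n. X \<theta> J) \<le> L"
      unfolding X_def sum_lessThan_of_bool S_def using card_crossing_levels[OF edges] assms(3,4)
      by simp
  qed
  finally show ?thesis unfolding S_def by (simp add: mult.commute)
qed

(* Since (m+1) d = n + m and m d = n - (m+1), the potential (m+1) t climbs by m along the edges
   {j, j+d} and by m+1 along {j, j+1}, while m t climbs by -(m+1) and m. *)
definition pot_Suc_m :: "nat \<Rightarrow> int" where "pot_Suc_m t = int (m+1) * int t"

definition pot_m :: "nat \<Rightarrow> int" where "pot_m t = int m * int t"

lemma Suc_m_times_d: "int (m+1) * int d = int n + int m"
  unfolding n_def d_def by (simp add: algebra_simps)

lemma m_times_d: "int m * int d = int n - int (m+1)"
  unfolding n_def d_def by (simp add: algebra_simps)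

lemma edge_intervals_pot_Suc_m: "edge_intervals pot_Suc_m pot_Suc_m m pot_Suc_m (m+1)"
  unfolding edge_intervals_def interval_joins_def
proof (intro conjI allI impI)
  show "0 < m" "m < n" "0 < m+1" "m+1 < n" using m_pos d_less_n unfolding d_def by auto
  fix j
  have "pot_Suc_m ((j+d) mod n) mod int n = (pot_Suc_m j + int m + int n) mod int n"
    unfolding pot_Suc_m_def mult_mod_add_mod Suc_m_times_d by (simp add: algebra_simps)
  then show "{pot_Suc_m j mod int n, (pot_Suc_m j + int m) mod int n}
           = {pot_Suc_m j mod int n, pot_Suc_m ((j+d) mod n) mod int n}" by simp
  have "pot_Suc_m ((j+1) mod n) mod int n = (pot_Suc_m j + int (m+1)) mod int n"
    unfolding pot_Suc_m_def mult_mod_add_mod by simp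
  then show "{pot_Suc_m j mod int n, (pot_Suc_m j + int (m+1)) mod int n}
           = {pot_Suc_m j mod int n, pot_Suc_m ((j+1) mod n) mod int n}" by simp
qed

lemma edge_intervals_pot_m: "edge_intervals pot_m (\<lambda>t. pot_m t - int (m+1)) (m+1) pot_m m"
  unfolding edge_intervals_def interval_joins_def
proof (intro conjI allI impI)
  show "0 < m" "m < n" "0 < m+1" "m+1 < n" using m_pos d_less_n unfolding d_def by auto
  fix j
  have "pot_m ((j+d) mod n) mod int n = (pot_m j - int (m+1) + int n) mod int n"
    unfolding pot_m_def mult_mod_add_mod m_times_d by (simp add: algebra_simps)
  then show "{(pot_m j - int (m+1)) mod int n, (pot_m j - int (m+1) + int (m+1)) mod int n}
           = {pot_m j mod int n, pot_m ((j+d) mod n) mod int n}" by auto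
  have "pot_m ((j+1) mod n) mod int n = (pot_m j + int m) mod int n"
    unfolding pot_m_def mult_mod_add_mod by simp
  then show "{pot_m j mod int n, (pot_m j + int m) mod int n}
           = {pot_m j mod int n, pot_m ((j+1) mod n) mod int n}" by simp
qed

lemma cycle_weight_ge_d:
  assumes c: "c \<in> f2vec (2*n)"
    and cycle: "\<And>i. i < n \<Longrightarrow> dot (2*n) c (HZ i) = 0"
    and not_boundary: "c \<notin> f2span (HX ` {..<n})"
  shows "d \<le> card {J. J < 2*n \<and> c J \<noteq> 0}"
proof -
  define X Y where "X = dot (2*n) fst_block c" and "Y = dot (2*n) snd_block c"
  have "X = 1 \<or> Y = 1"
    using cycle_in_f2span_hx[OF c cycle] not_boundary unfolding X_def Y_def by (metis bit_not_zero_iff)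
  moreover have "dot (2*n) c (level_cut pot_Suc_m m pot_Suc_m (m+1) 0) = of_nat m * X + of_nat (m+1) * Y"
    using dot_level_cut[OF edge_intervals_pot_Suc_m cycle, of 0] n_ge_5 unfolding X_def Y_def by simp
  moreover have "dot (2*n) c (level_cut (\<lambda>t. pot_m t - int (m+1)) (m+1) pot_m m 0)
      = of_nat (m+1) * X + of_nat m * Y"
    using dot_level_cut[OF edge_intervals_pot_m cycle, of 0] n_ge_5 unfolding X_def Y_def by simp
  ultimately have "dot (2*n) c (level_cut pot_Suc_m m pot_Suc_m (m+1) 0) = 1
      \<or> dot (2*n) c (level_cut (\<lambda>t. pot_m t - int (m+1)) (m+1) pot_m m 0) = 1"
    by (cases "even m") (auto simp: of_nat_bit)
  then have "n \<le> (m+1) * card {J. J < 2*n \<and> c J \<noteq> 0}"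
    using weight_ge_if_odd_level_cuts[OF edge_intervals_pot_Suc_m cycle, of "m+1"]
      weight_ge_if_odd_level_cuts[OF edge_intervals_pot_m cycle, of "m+1"] by auto
  then have "(m+1) * (2*m) < (m+1) * card {J. J < 2*n \<and> c J \<noteq> 0}"
    using Suc_m_mult_2m_less_n by linarith
  then have "2*m < card {J. J < 2*n \<and> c J \<noteq> 0}" by (metis mult_less_cancel1)
  then show ?thesis unfolding d_def by simp
qed

(* j -> -j on vertices, exchanging the two blocks of qubits *)
definition reflect :: "nat \<Rightarrow> nat" where
  "reflect J = (if J < n then n + (n - J) mod n else (n - (J - n)) mod n)"

lemma reflect_less: "reflect J < 2*n"
proof -
  have "x mod n < 2*n" for x using mod_n_less[of x] by linarith
  then show ?thesis unfolding reflect_def by auto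
qed

lemma reflect_reflect: "J < 2*n \<Longrightarrow> reflect (reflect J) = J"
  by (cases J n rule: block_cases) (auto simp: reflect_def mod_diff_self)

lemma hx_reflect:
  assumes i: "i < n" and "J < 2*n"
  shows "HX i (reflect J) = HZ ((n - i) mod n) J"
  using assms(2)
proof (cases J n rule: block_cases)
  case fst
  have "HX i (reflect J) = of_bool ((n - J) mod n = i \<or> (n - J) mod n = (i+d) mod n)"
    unfolding reflect_def using fst i by (simp add: hx_snd)
  also have "\<dots> = of_bool ((n - i) mod n = J \<or> (n - i) mod n = (J+d) mod n)"
    using fst i d_less_n by (simp add: mod_diff_self_eq_iff mod_diff_self_eq_add_iff)
  also have "\<dots> = HZ ((n - i) mod n) J" using fst by (simp add: hz_fst)
  finally show ?thesis .
next
  case (snd j)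
  have "HX i (reflect J) = of_bool ((n - j) mod n = i \<or> (n - j) mod n = (i+1) mod n)"
    unfolding reflect_def using snd i by (simp add: hx_fst)
  also have "\<dots> = of_bool ((n - i) mod n = j \<or> (n - i) mod n = (j+1) mod n)"
    using snd i n_ge_5 mod_diff_self_eq_add_iff[of j n i 1]
    by (simp add: mod_diff_self_eq_iff[of j n i])
  also have "\<dots> = HZ ((n - i) mod n) J" using snd by (simp add: hz_snd)
  finally show ?thesis .
qed simp

lemma hz_reflect:
  assumes "i < n" "J < 2*n"
  shows "HZ i (reflect J) = HX ((n - i) mod n) J"
  using hx_reflect[of "(n - i) mod n" "reflect J"] assms
  by (simp add: reflect_reflect reflect_less mod_diff_self)

lemma bij_betw_reflect: "bij_betw reflect {..<2*n} {..<2*n}"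
  by (rule bij_betw_byWitness[where f'=reflect]) (auto simp: reflect_reflect reflect_less)

definition reflected :: "(nat \<Rightarrow> bit) \<Rightarrow> nat \<Rightarrow> bit" where
  "reflected z J = (if J < 2*n then z (reflect J) else 0)"

lemma reflected_in_f2vec: "reflected z \<in> f2vec (2*n)"
  unfolding reflected_def f2vec_def by simp

lemma card_support_reflected:
  "card {J. J < 2*n \<and> reflected z J \<noteq> 0} = card {J. J < 2*n \<and> z J \<noteq> 0}"
proof -
  have "bij_betw reflect {J. J < 2*n \<and> reflected z J \<noteq> 0} {J. J < 2*n \<and> z J \<noteq> 0}"
    by (rule bij_betw_byWitness[where f'=reflect]) (auto simp: reflected_def reflect_reflect reflect_less)
  then show ?thesis by (rule bij_betw_same_card)
qed

lemma dot_reflected_hz: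
  assumes "i < n"
  shows "dot (2*n) (reflected z) (HZ i) = dot (2*n) z (HX ((n - i) mod n))"
proof -
  have "dot (2*n) (reflected z) (HZ i) = (\<Sum>J<2*n. z (reflect J) * HZ i J)"
    unfolding dot_def reflected_def by simp
  also have "\<dots> = (\<Sum>J<2*n. z (reflect (reflect J)) * HZ i (reflect J))"
    using sum.reindex_bij_betw[OF bij_betw_reflect, of "\<lambda>J. z (reflect J) * HZ i J"] by simp
  also have "\<dots> = dot (2*n) z (HX ((n - i) mod n))"
    unfolding dot_def by (rule sum.cong) (simp_all add: reflect_reflect hz_reflect assms)
  finally show ?thesis .
qed

lemma reflected_in_f2span_hx:
  assumes z: "z \<in> f2vec (2*n)" and "reflected z \<in> f2span (HX ` {..<n})"
  shows "z \<in> f2span (HZ ` {..<n})"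
proof -
  obtain I where I: "I \<subseteq> {..<n}" "reflected z = (\<lambda>J. \<Sum>i\<in>I. HX i J)"
    using assms(2) unfolding f2span_hx by auto
  have inj: "inj_on (\<lambda>i. (n - i) mod n) I"
    by (rule inj_on_inverseI[where g="\<lambda>i. (n - i) mod n"]) (use I in \<open>auto intro: mod_diff_self_involutive\<close>)
  have "z = (\<lambda>J. \<Sum>i\<in>(\<lambda>i. (n - i) mod n) ` I. HZ i J)"
  proof
    fix J
    show "z J = (\<Sum>i\<in>(\<lambda>i. (n - i) mod n) ` I. HZ i J)"
    proof (cases "J < 2*n")
      case True
      then have "z J = (\<Sum>i\<in>I. HX i (reflect J))"
        using fun_cong[OF I(2), of "reflect J"] by (simp add: reflected_def reflect_less reflect_reflect)
      also have "\<dots> = (\<Sum>i\<in>I. HZ ((n - i) mod n) J)"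
        using I(1) True by (intro sum.cong) (auto simp: hx_reflect)
      finally show ?thesis by (simp add: sum.reindex[OF inj])
    next
      case False
      then show ?thesis using z by (auto simp: f2vec_def hz_out intro!: sum.neutral[symmetric])
    qed
  qed
  moreover have "(\<lambda>i. (n - i) mod n) ` I \<subseteq> {..<n}" by auto
  ultimately show ?thesis unfolding f2span_hz by blast
qed

lemma cocycle_weight_ge_d:
  assumes z: "z \<in> f2vec (2*n)"
    and cocycle: "\<And>i. i < n \<Longrightarrow> dot (2*n) z (HX i) = 0"
    and not_coboundary: "z \<notin> f2span (HZ ` {..<n})"
  shows "d \<le> card {J. J < 2*n \<and> z J \<noteq> 0}"
proof -
  have "dot (2*n) (reflected z) (HZ i) = 0" if "i < n" for i
    using dot_reflected_hz[OF that] cocycle[of "(n - i) mod n"] by simp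
  moreover have "reflected z \<notin> f2span (HX ` {..<n})"
    using reflected_in_f2span_hx[OF z] not_coboundary by blast
  ultimately have "d \<le> card {J. J < 2*n \<and> reflected z J \<noteq> 0}"
    by (rule cycle_weight_ge_d[OF reflected_in_f2vec])
  then show ?thesis by (simp only: card_support_reflected)
qed

lemma coprime_Suc_m_n: "coprime (int (m+1)) (int n)"
proof (rule coprimeI)
  fix c assume "c dvd int (m+1)" "c dvd int n"
  then have "c dvd int n - int (2*m) * int (m+1)" by simp
  moreover have "int n - int (2*m) * int (m+1) = 1" unfolding n_def by (simp add: algebra_simps)
  ultimately show "is_unit c" by simp
qed

definition min_cut :: "nat \<Rightarrow> bit" where
  "min_cut = level_cut pot_Suc_m m pot_Suc_m (m+1) 0"

lemma card_crosses_level_0: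
  assumes "l \<le> n"
  shows "card {j. j < n \<and> in_cyclic_interval n (pot_Suc_m j) l 0} = l"
proof -
  have "in_cyclic_interval n (pot_Suc_m j) l 0 \<longleftrightarrow> (- int (m+1) * int j + -1) mod int n < int l" for j
  proof -
    have "0 - pot_Suc_m j - 1 = - int (m+1) * int j + -1" unfolding pot_Suc_m_def by algebra
    then show ?thesis unfolding in_cyclic_interval_def by simp
  qed
  moreover have "coprime (- int (m+1)) (int n)" by (subst coprime_minus_left_iff) (rule coprime_Suc_m_n)
  ultimately show ?thesis using card_affine_mod_less[of "- int (m+1)" n l "-1"] n_ge_5 assms by simp
qed

lemma card_min_cut_fst: "card {j. j < n \<and> min_cut j \<noteq> 0} = m"
proof -
  have "{j. j < n \<and> min_cut j \<noteq> 0} = {j. j < n \<and> in_cyclic_interval n (pot_Suc_m j) m 0}"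
    unfolding min_cut_def level_cut_def crosses_def by auto
  then show ?thesis using card_crosses_level_0[of m] d_less_n unfolding d_def by simp
qed

lemma card_min_cut_snd: "card {j. j < n \<and> min_cut (n+j) \<noteq> 0} = m+1"
proof -
  have "{j. j < n \<and> min_cut (n+j) \<noteq> 0} = {j. j < n \<and> in_cyclic_interval n (pot_Suc_m j) (m+1) 0}"
    unfolding min_cut_def level_cut_def crosses_def by auto
  then show ?thesis using card_crosses_level_0[of "m+1"] d_less_n unfolding d_def by simp
qed

lemma min_cut_weight: "card {J. J < 2*n \<and> min_cut J \<noteq> 0} = d"
  unfolding card_lessThan_double card_min_cut_fst card_min_cut_snd d_def by simp

lemma min_cut_in_f2vec: "min_cut \<in> f2vec (2*n)"
  unfolding f2vec_def min_cut_def level_cut_def crosses_def by simp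

lemma min_cut_cocycle: "i < n \<Longrightarrow> dot (2*n) min_cut (HX i) = 0"
  using dot_level_cut[OF edge_intervals_pot_Suc_m hx_dot_hz, of i 0]
    f2span_hx_dot_blocks[OF in_f2span, of "HX i"] n_ge_5
  unfolding min_cut_def by (simp add: dot_commute)

lemma min_cut_not_coboundary: "min_cut \<notin> f2span (HZ ` {..<n})"
proof
  have "dot (2*n) fst_block min_cut = of_nat m" "dot (2*n) snd_block min_cut = of_nat (m+1)"
    using card_min_cut_fst card_min_cut_snd
    unfolding dot_fst_block dot_snd_block min_cut_def level_cut_def sum_lessThan_of_bool by simp_all
  moreover assume "min_cut \<in> f2span (HZ ` {..<n})"
  ultimately show False using f2span_hz_dot_blocks by (simp add: of_nat_bit)
qed

lemma stab_x_row: "i < n \<Longrightarrow> (HX i, \<lambda>_. 0) \<in> gb_stab n a b"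
  unfolding gb_stab_def by (simp add: in_f2span zero_in_f2span)

lemma stab_z_row: "i < n \<Longrightarrow> (\<lambda>_. 0, HZ i) \<in> gb_stab n a b"
  unfolding gb_stab_def by (simp add: in_f2span zero_in_f2span)

lemma logical_weight_ge_d:
  assumes "(x, z) \<in> gb_logical n a b"
  shows "d \<le> pauli_weight (2*n) (x, z)"
proof -
  have x: "x \<in> f2vec (2*n)" and z: "z \<in> f2vec (2*n)"
    and commutes: "\<And>s. s \<in> gb_stab n a b \<Longrightarrow> symp (2*n) (x, z) s = 0"
    and not_stab: "(x, z) \<notin> gb_stab n a b"
    using assms unfolding gb_logical_def paulis_def by auto
  have cycle: "dot (2*n) x (HZ i) = 0" if "i < n" for i
    using commutes[OF stab_z_row[OF that]] unfolding symp_def dot_def by simp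
  have cocycle: "dot (2*n) z (HX i) = 0" if "i < n" for i
    using commutes[OF stab_x_row[OF that]] unfolding symp_def dot_def by simp
  have "card {J. J < 2*n \<and> x J \<noteq> 0} \<le> pauli_weight (2*n) (x, z)"
    "card {J. J < 2*n \<and> z J \<noteq> 0} \<le> pauli_weight (2*n) (x, z)"
    unfolding pauli_weight_def by (auto intro: card_mono)
  moreover have "x \<notin> f2span (HX ` {..<n}) \<or> z \<notin> f2span (HZ ` {..<n})"
    using not_stab unfolding gb_stab_def by auto
  ultimately show ?thesis
    using cycle_weight_ge_d[OF x cycle] cocycle_weight_ge_d[OF z cocycle] by (meson order_trans)
qed

lemma min_cut_logical: "(\<lambda>_. 0, min_cut) \<in> gb_logical n a b"
  unfolding gb_logical_def
proof (intro CollectI conjI ballI)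
  show "(\<lambda>_. 0, min_cut) \<in> paulis (2*n)" using min_cut_in_f2vec unfolding paulis_def f2vec_def by simp
  show "(\<lambda>_. 0, min_cut) \<notin> gb_stab n a b" unfolding gb_stab_def using min_cut_not_coboundary by simp
  fix s assume "s \<in> gb_stab n a b"
  then have "fst s \<in> f2span (HX ` {..<n})" unfolding gb_stab_def by auto
  then have "dot (2*n) min_cut (fst s) = 0"
    by (rule dot_f2span_eq_0[rotated]) (auto simp: min_cut_cocycle)
  then show "symp (2*n) (\<lambda>_. 0, min_cut) s = 0" unfolding symp_def dot_def by simp
qed

lemma gb_distance_eq_d: "gb_distance n a b = d"
  unfolding gb_distance_def
proof (rule Least_equality)
  have "pauli_weight (2*n) (\<lambda>_. 0, min_cut) = d"
    unfolding pauli_weight_def using min_cut_weight by simp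
  then show "\<exists>p\<in>gb_logical n a b. pauli_weight (2*n) p = d" using min_cut_logical by blast
next
  fix w assume "\<exists>p\<in>gb_logical n a b. pauli_weight (2*n) p = w"
  then obtain x z where "(x, z) \<in> gb_logical n a b" "pauli_weight (2*n) (x, z) = w" by auto
  then show "d \<le> w" using logical_weight_ge_d by blast
qed

lemma face_stabilizer_weight_4:
  "(HX 0, \<lambda>_. 0) \<in> gb_stab n a b" "(HX 0, \<lambda>_. 0) \<noteq> (\<lambda>_. 0, \<lambda>_. 0)"
  "pauli_weight (2*n) (HX 0, \<lambda>_. 0) = 4"
proof -
  have "0 < n" using n_ge_5 by simp
  then show "(HX 0, \<lambda>_. 0) \<in> gb_stab n a b" by (rule stab_x_row)
  have "HX 0 0 = 1" using \<open>0 < n\<close> by (simp add: hx_fst)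
  then show "(HX 0, \<lambda>_. 0) \<noteq> (\<lambda>_. 0, \<lambda>_. 0)" by (metis one_neq_zero prod.inject)
  show "pauli_weight (2*n) (HX 0, \<lambda>_. 0) = 4"
    using regular_hx \<open>0 < n\<close> unfolding pauli_weight_def regular_2_4_def by simp
qed

end

theorem theorem4:
  fixes d :: nat
  assumes "odd d" and "d \<ge> 3"
  shows "\<exists>n a b. ring_elem n a \<and> ring_elem n b \<and> 2*n = d^2 + 1 \<and>
           gb_dim n a b = 2 \<and> gb_distance n a b = d \<and> gb_regular_2_4 n a b \<and>
           (d \<noteq> 3 \<longrightarrow> gb_degenerate n a b \<and>
              (\<exists>s\<in>gb_stab n a b. s \<noteq> (\<lambda>_. 0, \<lambda>_. 0) \<and> pauli_weight (2*n) s = 4 \<and> 4 < d))"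
proof -
  define m where "m = d div 2"
  have d: "d = 2*m + 1" using assms(1) unfolding m_def by simp
  interpret G: gb_twisted_torus m using assms(2) d by unfold_locales simp
  have dG: "G.d = d" unfolding G.d_def d ..
  have weight_4: "\<exists>s\<in>gb_stab G.n G.a G.b. s \<noteq> (\<lambda>_. 0, \<lambda>_. 0) \<and> pauli_weight (2*G.n) s = 4 \<and> 4 < d"
    if "d \<noteq> 3"
    using G.face_stabilizer_weight_4 that assms d by fastforce
  then have "d \<noteq> 3 \<longrightarrow> gb_degenerate G.n G.a G.b"
    unfolding gb_degenerate_def G.gb_distance_eq_d dG by fastforce
  moreover have "gb_regular_2_4 G.n G.a G.b"
    unfolding gb_regular_2_4_def using G.regular_hx G.regular_hz by simp
  ultimately show ?thesis
    using G.ring_elem_a G.ring_elem_b G.d_sq G.gb_dim_eq_2 G.gb_distance_eq_d dG weight_4 by metis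
qed

end
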